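(* Let $I$ be an index set and $P_r,Q_r\in GL(n,\mathbb C)$ for $r\in I$. There exists a ($C^1$-)diffeomorphism $f\colon\mathbb C^n\to\mathbb C^n$ (of the underlying real space $\mathbb R^{2n}$) with $f(P_rw)=Q_rf(w)$ for all $w\in\mathbb C^n$, $r\in I$, if and only if there exists an invertible $\mathbb R$-linear map $L\colon\mathbb C^n\to\mathbb C^n$, $L(w)=Mw+N\overline w$ with $M,N$ complex $n\times n$ matrices, such that $L(P_rw)=Q_rL(w)$ for all $w\in\mathbb C^n$, $r\in I$. *)

theory Defs
  imports "HOL-Analysis.Analysis"
begin

definition vec_cnj :: "complex ^ 'n \<Rightarrow> complex ^ 'n" where
  "vec_cnj w = (\<chi> i. cnj (w $ i))"

definition C1_diffeo :: "('a::real_normed_vector \<Rightarrow> 'a) \<Rightarrow> bool" where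
  "C1_diffeo f \<longleftrightarrow> bij f
     \<and> (\<exists>f'. (\<forall>x. (f has_derivative blinfun_apply (f' x)) (at x)) \<and> continuous_on UNIV f')
     \<and> (\<exists>g'. (\<forall>y. (inv f has_derivative blinfun_apply (g' y)) (at y)) \<and> continuous_on UNIV g')"

end

theory Submission imports Defs begin

(* The map w |-> M w + N (cnj w) is real-linear (linear_conj_form_map), and conversely every
   real-linear map of C^n has this form (real_linear_conj_form).  So the theorem says that the
   actions are C^1-conjugate iff they are conjugate by a real-linear bijection.

   "If": an invertible linear map of a finite-dimensional space is a C^1-diffeomorphism,
   being (together with its linear inverse) its own derivative everywhere.
   "Only if": linearise f at the common fixed point 0 of all P_r.  Differentiating
   f o P_r = Q_r o f at 0 shows that L = Df(0) intertwines P_r and Q_r, and the chain rule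
   applied to inv f o f = id and f o inv f = id shows that L is bijective.
   Neither direction needs the invertibility of P_r and Q_r. *)

definition conj_form_map ::
    "complex ^ 'n ^ 'm \<Rightarrow> complex ^ 'n ^ 'm \<Rightarrow> complex ^ 'n \<Rightarrow> complex ^ 'm"
  where "conj_form_map M N w = M *v w + N *v vec_cnj w"

lemma complex_real_linear_conj_form:
  fixes a b z :: complex
  shows "(a - \<i> * b) / 2 * z + (a + \<i> * b) / 2 * cnj z = Re z *\<^sub>R a + Im z *\<^sub>R b"
  by (cases z) (simp add: Complex_eq scaleR_conv_of_real field_simps)

lemma vec_real_basis_expansion:
  fixes w :: "complex ^ 'n"
  shows "w = (\<Sum>j\<in>UNIV. Re (w $ j) *\<^sub>R axis j 1 + Im (w $ j) *\<^sub>R axis j \<i>)"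
proof -
  have "(\<Sum>j\<in>UNIV. Re (w $ j) *\<^sub>R axis j 1 + Im (w $ j) *\<^sub>R axis j \<i>) $ i = w $ i" for i
  proof -
    have "(\<Sum>j\<in>UNIV. Re (w $ j) *\<^sub>R axis j 1 + Im (w $ j) *\<^sub>R axis j \<i>) $ i
        = (\<Sum>j\<in>UNIV. if j = i then w $ i else 0)"
      unfolding sum_component
      by (rule sum.cong) (auto simp: axis_def complex_eq_iff)
    then show ?thesis by simp
  qed
  then show ?thesis by (simp add: vec_eq_iff)
qed

lemma vec_cnj_add: "vec_cnj (x + y) = vec_cnj x + vec_cnj y"
  by (simp add: vec_cnj_def vec_eq_iff)

lemma vec_cnj_scaleR: "vec_cnj (c *\<^sub>R x) = c *\<^sub>R vec_cnj x"
  by (simp add: vec_cnj_def vec_eq_iff)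

lemma linear_conj_form_map: "linear (conj_form_map M N)"
  by (rule linearI)
    (simp_all add: conj_form_map_def vec_cnj_add vec_cnj_scaleR matrix_vector_right_distrib
      linear_scale[OF matrix_vector_mul_linear] algebra_simps)

text \<open>Every real-linear map \<open>L : \<complex>^n \<rightarrow> \<complex>^m\<close> is \<open>w \<mapsto> M w + N (cnj w)\<close>, where column \<open>j\<close> of
  \<open>M\<close> and \<open>N\<close> is obtained from \<open>L e\<^sub>j\<close> and \<open>L (\<i> e\<^sub>j)\<close> as in the one-dimensional case.\<close>
lemma real_linear_conj_form:
  fixes L :: "complex ^ 'n \<Rightarrow> complex ^ 'm"
  assumes "linear L"
  obtains M N where "L = conj_form_map M N"
proof
  define M :: "complex ^ 'n ^ 'm"
    where "M = (\<chi> i j. (L (axis j 1) $ i - \<i> * L (axis j \<i>) $ i) / 2)"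
  define N :: "complex ^ 'n ^ 'm"
    where "N = (\<chi> i j. (L (axis j 1) $ i + \<i> * L (axis j \<i>) $ i) / 2)"
  have "conj_form_map M N w $ i = L w $ i" for w i
  proof -
    have "conj_form_map M N w $ i = (\<Sum>j\<in>UNIV. M $ i $ j * w $ j + N $ i $ j * cnj (w $ j))"
      by (simp add: conj_form_map_def matrix_vector_mult_def vec_cnj_def sum.distrib)
    also have "\<dots> = (\<Sum>j\<in>UNIV. Re (w $ j) *\<^sub>R L (axis j 1) + Im (w $ j) *\<^sub>R L (axis j \<i>)) $ i"
      unfolding sum_component
    proof (intro sum.cong refl)
      fix j
      show "M $ i $ j * w $ j + N $ i $ j * cnj (w $ j)
          = (Re (w $ j) *\<^sub>R L (axis j 1) + Im (w $ j) *\<^sub>R L (axis j \<i>)) $ i"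
        using complex_real_linear_conj_form[of "L (axis j 1) $ i" "L (axis j \<i>) $ i" "w $ j"]
        by (simp add: M_def N_def algebra_simps)
    qed
    also have "(\<Sum>j\<in>UNIV. Re (w $ j) *\<^sub>R L (axis j 1) + Im (w $ j) *\<^sub>R L (axis j \<i>)) = L w"
      by (subst (2) vec_real_basis_expansion)
        (simp add: linear_sum[OF assms] linear_add[OF assms] linear_scale[OF assms])
    finally show ?thesis .
  qed
  then show "L = conj_form_map M N" by (simp add: fun_eq_iff vec_eq_iff)
qed

text \<open>The derivative of a bijection whose inverse is differentiable at the image point is
  bijective: by the chain rule it has the derivative of the inverse as two-sided inverse.\<close>
lemma bij_derivative_of_bij:
  fixes f :: "'a::real_normed_vector \<Rightarrow> 'b::real_normed_vector"
  assumes "bij f"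
    and f': "(f has_derivative L) (at x)"
    and g': "(inv f has_derivative G) (at (f x))"
  shows "bij L"
proof -
  have "(inv f \<circ> f) = id" "f \<circ> inv f = id"
    using \<open>bij f\<close> by (simp_all add: bij_is_inj bij_is_surj inj_iff[symmetric] surj_iff[symmetric])
  moreover have "((inv f \<circ> f) has_derivative G \<circ> L) (at x)"
    using diff_chain_at[OF f' g'] .
  moreover have "(f has_derivative L) (at (inv f (f x)))"
    using f' \<open>bij f\<close> by (simp add: bij_is_inj)
  then have "((f \<circ> inv f) has_derivative L \<circ> G) (at (f x))"
    using diff_chain_at[OF g'] by blast
  ultimately have "G \<circ> L = id" "L \<circ> G = id"
    using has_derivative_unique has_derivative_id by (metis id_def)+
  then show "bij L" using o_bij by blast
qed

lemma C1_diffeo_derivative: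
  fixes f :: "'a::real_normed_vector \<Rightarrow> 'a"
  assumes "C1_diffeo f"
  obtains L where "linear L" "bij L" "(f has_derivative L) (at x)"
proof -
  from assms obtain f' g' where "bij f"
    and f': "\<And>x. (f has_derivative blinfun_apply (f' x)) (at x)"
    and g': "\<And>y. (inv f has_derivative blinfun_apply (g' y)) (at y)"
    unfolding C1_diffeo_def by blast
  have "linear (blinfun_apply (f' x))"
    by (simp add: blinfun.bounded_linear_right bounded_linear.linear)
  moreover have "bij (blinfun_apply (f' x))"
    using bij_derivative_of_bij[OF \<open>bij f\<close> f' g'] .
  ultimately show ?thesis using that f' by blast
qed

text \<open>If \<open>f \<circ> A = B \<circ> f\<close> for bounded linear \<open>A\<close>, \<open>B\<close>, then the derivative of \<open>f\<close> at the fixed point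
  \<open>0\<close> of \<open>A\<close> satisfies \<open>L \<circ> A = B \<circ> L\<close>: differentiate both sides at \<open>0\<close>.\<close>
lemma derivative_at_zero_intertwines:
  fixes f :: "'a::real_normed_vector \<Rightarrow> 'b::real_normed_vector"
  assumes equiv: "\<And>w. f (A w) = B (f w)"
    and A: "bounded_linear A" and B: "bounded_linear B"
    and f': "(f has_derivative L) (at 0)"
  shows "L (A w) = B (L w)"
proof -
  have "(f has_derivative L) (at (A 0))"
    using f' by (simp add: linear_simps(3)[OF A])
  then have "((f \<circ> A) has_derivative L \<circ> A) (at 0)"
    using diff_chain_at[OF bounded_linear_imp_has_derivative[OF A]] by blast
  moreover have "((B \<circ> f) has_derivative B \<circ> L) (at 0)"
    using diff_chain_at[OF f' bounded_linear_imp_has_derivative[OF B]] .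
  moreover have "f \<circ> A = B \<circ> f" using equiv by (simp add: fun_eq_iff)
  ultimately have "L \<circ> A = B \<circ> L" using has_derivative_unique by metis
  then show ?thesis by (metis comp_apply)
qed

text \<open>Conversely, a linear bijection of a finite-dimensional space is a \<open>C\<^sup>1\<close>-diffeomorphism:
  it and its (linear) inverse are their own constant derivatives.\<close>
lemma linear_bij_C1_diffeo:
  fixes L :: "'a::euclidean_space \<Rightarrow> 'a"
  assumes "linear L" "bij L"
  shows "C1_diffeo L"
proof -
  have lin: "bounded_linear L" "bounded_linear (inv L)"
    using assms by (simp_all add: linear_linear inj_linear_imp_inv_linear bij_is_inj)
  have "(T has_derivative blinfun_apply (Blinfun T)) (at x)" if "bounded_linear T" for T x
    using that by (simp add: bounded_linear_Blinfun_apply bounded_linear_imp_has_derivative)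
  then show ?thesis
    unfolding C1_diffeo_def using lin \<open>bij L\<close> by (metis continuous_on_const)
qed

theorem theorem3p4:
  fixes I :: "'i set"
    and P Q :: "'i \<Rightarrow> complex ^ 'n ^ 'n"
  assumes "\<forall>r\<in>I. invertible (P r) \<and> invertible (Q r)"
  shows "(\<exists>f :: complex ^ 'n \<Rightarrow> complex ^ 'n. C1_diffeo f \<and>
            (\<forall>r\<in>I. \<forall>w. f (P r *v w) = Q r *v f w))
     \<longleftrightarrow> (\<exists>M N :: complex ^ 'n ^ 'n.
            bij (\<lambda>w. M *v w + N *v vec_cnj w) \<and>
            (\<forall>r\<in>I. \<forall>w. M *v (P r *v w) + N *v vec_cnj (P r *v w)
                        = Q r *v (M *v w + N *v vec_cnj w)))"
proof -
  let ?intertwines = "\<lambda>L. \<forall>r\<in>I. \<forall>w. L (P r *v w) = Q r *v L w"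
  have "(\<exists>f. C1_diffeo f \<and> ?intertwines f) \<longleftrightarrow> (\<exists>L. linear L \<and> bij L \<and> ?intertwines L)"
  proof
    assume "\<exists>f. C1_diffeo f \<and> ?intertwines f"
    then obtain f where "C1_diffeo f" "?intertwines f" by blast
    moreover obtain L where "linear L" "bij L" "(f has_derivative L) (at 0)"
      using C1_diffeo_derivative[OF \<open>C1_diffeo f\<close>] by blast
    ultimately show "\<exists>L. linear L \<and> bij L \<and> ?intertwines L"
      using derivative_at_zero_intertwines[of f] by auto
  qed (use linear_bij_C1_diffeo in blast)
  also have "\<dots> \<longleftrightarrow> (\<exists>M N. bij (conj_form_map M N) \<and> ?intertwines (conj_form_map M N))"
    using real_linear_conj_form linear_conj_form_map by metis
  finally show ?thesis by (simp add: conj_form_map_def[abs_def])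
qed

end
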